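(* Let $f\in A[X]$ be monic with discriminant $\Delta=\mathrm{Res}_X(f,f')\neq 0$, $r=v(\Delta)$, and let $N>r$ be an integer. Let $f_N\in (A/\pi^NA)[X]$ be the reduction of $f$ modulo $\pi^N$ and $S_N\subseteq A/\pi^NA$ its set of roots. Then the number of roots of $f$ in $K$ is at most $|S_N/\approx|$.
   Context: $K$ is a field complete with respect to a non-archimedean discrete valuation $v$, normalized by $v(\pi)=1$ for a uniformizer $\pi$ of the valuation ring $A=\{x\in K: v(x)\geq 0\}$; the residue field $A/\pi A$ is finite. The equivalence relation $\approx$ on $S_N$ is: $x\approx y$ iff either $N\leq r$ and $x=y$, or $N>r$ and $x\equiv y \pmod{\overline{\pi}^{\,r+1}}$, where $\overline{\pi}$ is the image of $\pi$ in $A/\pi^NA$. *)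

theory Defs
  imports "Subresultants.Resultant_Prelim"
begin

text \<open>A field K with a discrete valuation v, normalized by v(pi) = 1.
  The valuation is only meaningful on nonzero elements (v 0 is irrelevant; v(0) = +infinity
  is encoded by the predicate val_ge).\<close>

definition val_ge :: "('a::field \<Rightarrow> int) \<Rightarrow> 'a \<Rightarrow> int \<Rightarrow> bool" where
  "val_ge v x M \<longleftrightarrow> x = 0 \<or> v x \<ge> M"

definition val_ring :: "('a::field \<Rightarrow> int) \<Rightarrow> 'a set" where
  "val_ring v = {x. val_ge v x 0}"

definition cong_pow :: "('a::field \<Rightarrow> int) \<Rightarrow> nat \<Rightarrow> ('a \<times> 'a) set" where
  "cong_pow v N = {(x, y). x \<in> val_ring v \<and> y \<in> val_ring v \<and> val_ge v (x - y) (int N)}"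

definition quot_ring :: "('a::field \<Rightarrow> int) \<Rightarrow> nat \<Rightarrow> 'a set set" where
  "quot_ring v N = val_ring v // cong_pow v N"

definition discrete_valued_field :: "('a::field \<Rightarrow> int) \<Rightarrow> 'a \<Rightarrow> bool" where
  "discrete_valued_field v \<pi> \<longleftrightarrow>
     (\<forall>x y. x \<noteq> 0 \<longrightarrow> y \<noteq> 0 \<longrightarrow> v (x * y) = v x + v y) \<and>
     (\<forall>x y. x \<noteq> 0 \<longrightarrow> y \<noteq> 0 \<longrightarrow> x + y \<noteq> 0 \<longrightarrow> v (x + y) \<ge> min (v x) (v y)) \<and>
     \<pi> \<noteq> 0 \<and> v \<pi> = 1"

definition val_complete :: "('a::field \<Rightarrow> int) \<Rightarrow> bool" where
  "val_complete v \<longleftrightarrow>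
     (\<forall>s :: nat \<Rightarrow> 'a. (\<forall>M. \<exists>n0. \<forall>m\<ge>n0. \<forall>n\<ge>n0. val_ge v (s m - s n) M) \<longrightarrow>
        (\<exists>L. \<forall>M. \<exists>n0. \<forall>n\<ge>n0. val_ge v (s n - L) M))"

definition finite_residue_field :: "('a::field \<Rightarrow> int) \<Rightarrow> bool" where
  "finite_residue_field v \<longleftrightarrow> finite (quot_ring v 1)"

text \<open>S_N: roots of f mod pi^N in A/pi^N A. A class C is a root of f_N iff
  f(x) lies in pi^N A for a (any) representative x of C.\<close>
definition roots_mod :: "('a::field \<Rightarrow> int) \<Rightarrow> 'a poly \<Rightarrow> nat \<Rightarrow> 'a set set" where
  "roots_mod v f N = {C \<in> quot_ring v N. \<exists>x\<in>C. val_ge v (poly f x) (int N)}"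

definition approx_rel :: "('a::field \<Rightarrow> int) \<Rightarrow> 'a poly \<Rightarrow> nat \<Rightarrow> nat \<Rightarrow> ('a set \<times> 'a set) set" where
  "approx_rel v f N r = {(C, D). C \<in> roots_mod v f N \<and> D \<in> roots_mod v f N \<and>
     ((N \<le> r \<and> C = D) \<or>
      (N > r \<and> (\<exists>x\<in>C. \<exists>y\<in>D. (x, y) \<in> cong_pow v (r + 1))))}"

end

theory Submission
  imports Defs "Subresultants.Subresultant"
begin

text \<open>
  Every root of the monic integral polynomial f lies in A, so it determines a class of
  S_N/\<approx>. If two distinct roots \<alpha>, \<beta> had the same class, then \<alpha> \<equiv> \<beta> mod \<pi>^(r+1).
  Writing f = (X - \<alpha>) h gives f'(\<alpha>) = h(\<alpha>) \<equiv> h(\<beta>) = 0, so both f(\<alpha>) and f'(\<alpha>) lie in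
  \<pi>^(r+1) A. Evaluating the Sylvester-type matrix of the resultant at \<alpha>, its last row consists of
  multiples of f(\<alpha>) and f'(\<alpha>), hence v(\<Delta>) \<ge> r + 1, a contradiction.
\<close>

locale discrete_valuation =
  fixes v :: "'a::field \<Rightarrow> int" and \<pi> :: 'a
  assumes discrete_valued_field: "discrete_valued_field v \<pi>"
begin

lemma v_mult: "x \<noteq> 0 \<Longrightarrow> y \<noteq> 0 \<Longrightarrow> v (x * y) = v x + v y"
  using discrete_valued_field unfolding discrete_valued_field_def by blast

lemma v_add: "x \<noteq> 0 \<Longrightarrow> y \<noteq> 0 \<Longrightarrow> x + y \<noteq> 0 \<Longrightarrow> v (x + y) \<ge> min (v x) (v y)"
  using discrete_valued_field unfolding discrete_valued_field_def by blast

lemma pi_nonzero: "\<pi> \<noteq> 0" and v_pi: "v \<pi> = 1"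
  using discrete_valued_field unfolding discrete_valued_field_def by blast+

lemma v_one: "v 1 = 0"
  using v_mult[of 1 1] by simp

lemma v_uminus: "x \<noteq> 0 \<Longrightarrow> v (- x) = v x"
  using v_mult[of "-1" x] v_mult[of "-1" "-1"] v_one by simp

lemma v_power: "x \<noteq> 0 \<Longrightarrow> v (x ^ n) = int n * v x"
  by (induction n) (auto simp: v_one v_mult algebra_simps)

lemma val_ge_0 [simp]: "val_ge v 0 M"
  by (simp add: val_ge_def)

lemma val_ge_1: "val_ge v 1 0"
  by (simp add: val_ge_def v_one)

lemma val_ge_mono: "val_ge v x a \<Longrightarrow> b \<le> a \<Longrightarrow> val_ge v x b"
  unfolding val_ge_def by auto

lemma val_ge_add: "val_ge v x M \<Longrightarrow> val_ge v y M \<Longrightarrow> val_ge v (x + y) M"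
  unfolding val_ge_def using v_add[of x y] by fastforce

lemma val_ge_uminus: "val_ge v x M \<Longrightarrow> val_ge v (- x) M"
  unfolding val_ge_def by (cases "x = 0") (auto simp: v_uminus)

lemma val_ge_mult: "val_ge v x a \<Longrightarrow> val_ge v y b \<Longrightarrow> val_ge v (x * y) (a + b)"
  unfolding val_ge_def by (cases "x = 0 \<or> y = 0") (auto simp: v_mult)

lemma val_ge_mult_integral: "val_ge v x 0 \<Longrightarrow> val_ge v y M \<Longrightarrow> val_ge v (x * y) M"
  using val_ge_mult[of x 0 y M] by simp

lemma val_ge_sum: "(\<And>i. i \<in> S \<Longrightarrow> val_ge v (f i) M) \<Longrightarrow> val_ge v (sum f S) M"
  by (induction S rule: infinite_finite_induct) (auto simp: val_ge_add)

lemma val_ge_prod_integral: "(\<And>i. i \<in> S \<Longrightarrow> val_ge v (f i) 0) \<Longrightarrow> val_ge v (prod f S) 0"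
  by (induction S rule: infinite_finite_induct) (auto simp: val_ge_1 val_ge_mult_integral)

lemma val_ge_of_nat: "val_ge v (of_nat k) 0"
  by (induction k) (auto simp: val_ge_add val_ge_1)

lemma val_ge_power_integral: "val_ge v x 0 \<Longrightarrow> val_ge v (x ^ n) 0"
  by (induction n) (auto simp: val_ge_1 val_ge_mult_integral)

lemma val_ge_pi_power: "val_ge v (\<pi> ^ n) (int n)"
  unfolding val_ge_def using v_power[OF pi_nonzero, of n] v_pi by simp

lemma val_ge_pi_power_integral: "val_ge v (\<pi> ^ n) 0"
  by (rule val_ge_mono[OF val_ge_pi_power]) simp

lemma val_ge_divide_pi_power: "val_ge v x (int n + M) \<Longrightarrow> val_ge v (x / \<pi> ^ n) M"
proof (cases "x = 0")
  case False
  assume x: "val_ge v x (int n + M)"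
  have "\<pi> ^ n \<noteq> 0" using pi_nonzero by simp
  then have "v x = v (x / \<pi> ^ n) + int n"
    using v_mult[of "x / \<pi> ^ n" "\<pi> ^ n"] False v_power[OF pi_nonzero, of n] v_pi by simp
  then show ?thesis using x False unfolding val_ge_def by auto
qed simp

lemma val_ring_iff: "x \<in> val_ring v \<longleftrightarrow> val_ge v x 0"
  by (simp add: val_ring_def)

lemma equiv_cong_pow: "equiv (val_ring v) (cong_pow v n)"
proof (rule equivI)
  show "refl_on (val_ring v) (cong_pow v n)"
    by (auto simp: refl_on_def cong_pow_def)
  show "sym (cong_pow v n)"
    by (rule symI) (auto simp: cong_pow_def dest: val_ge_uminus)
  show "trans (cong_pow v n)"
    by (rule transI) (auto simp: cong_pow_def dest: val_ge_add)
qed (auto simp: cong_pow_def)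

lemma cong_pow_antimono: "m \<le> n \<Longrightarrow> cong_pow v n \<subseteq> cong_pow v m"
  using val_ge_mono[of _ "int n" "int m"] by (auto simp: cong_pow_def)

lemma cong_pow_class_in_quot_ring: "x \<in> val_ring v \<Longrightarrow> cong_pow v n `` {x} \<in> quot_ring v n"
  unfolding quot_ring_def by (rule quotientI)

lemma cong_pow_some_rep: "x \<in> val_ring v \<Longrightarrow> (x, SOME a. a \<in> cong_pow v n `` {x}) \<in> cong_pow v n"
proof -
  assume "x \<in> val_ring v"
  then have "x \<in> cong_pow v n `` {x}" by (simp add: cong_pow_def val_ring_iff)
  then have "(SOME a. a \<in> cong_pow v n `` {x}) \<in> cong_pow v n `` {x}" by (rule someI)
  then show ?thesis by simp
qed

lemma cong_pow_Suc_digit: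
  assumes xa: "(x, a) \<in> cong_pow v m" and zb: "((x - a) / \<pi> ^ m, b) \<in> cong_pow v 1"
  shows "(x, a + \<pi> ^ m * b) \<in> cong_pow v (Suc m)"
proof -
  have "\<pi> ^ m * ((x - a) / \<pi> ^ m) = x - a" using pi_nonzero by simp
  then have "x - (a + \<pi> ^ m * b) = \<pi> ^ m * ((x - a) / \<pi> ^ m - b)"
    by (simp add: right_diff_distrib diff_diff_eq)
  moreover have "val_ge v (\<pi> ^ m * ((x - a) / \<pi> ^ m - b)) (int m + 1)"
    using zb val_ge_mult[OF val_ge_pi_power] by (simp add: cong_pow_def)
  moreover have "val_ge v (a + \<pi> ^ m * b) 0"
    using xa zb by (auto simp: cong_pow_def val_ring_iff
        intro!: val_ge_add val_ge_mult_integral[OF val_ge_pi_power_integral])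
  ultimately show ?thesis
    using xa by (simp add: cong_pow_def val_ring_iff add.commute)
qed

text \<open>Hence A/\<pi>^(m+1) A is covered by A/\<pi>^m A \<times> A/\<pi> A.\<close>

lemma quot_ring_Suc_subset:
  "quot_ring v (Suc m) \<subseteq> (\<lambda>(C, D). cong_pow v (Suc m) `` {(SOME a. a \<in> C) + \<pi> ^ m * (SOME b. b \<in> D)})
      ` (quot_ring v m \<times> quot_ring v 1)"
proof
  fix X assume "X \<in> quot_ring v (Suc m)"
  then obtain x where x: "x \<in> val_ring v" and X: "X = cong_pow v (Suc m) `` {x}"
    unfolding quot_ring_def by (auto elim: quotientE)
  define C where "C = cong_pow v m `` {x}"
  define a where "a = (SOME a. a \<in> C)"
  have xa: "(x, a) \<in> cong_pow v m"
    unfolding a_def C_def using x by (rule cong_pow_some_rep)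
  then have "val_ge v ((x - a) / \<pi> ^ m) 0"
    using val_ge_divide_pi_power[of "x - a" m 0] by (simp add: cong_pow_def)
  define D where "D = cong_pow v 1 `` {(x - a) / \<pi> ^ m}"
  define b where "b = (SOME b. b \<in> D)"
  have "((x - a) / \<pi> ^ m, b) \<in> cong_pow v 1"
    unfolding b_def D_def using \<open>val_ge v ((x - a) / \<pi> ^ m) 0\<close>
    by (intro cong_pow_some_rep) (simp add: val_ring_iff)
  then have "X = cong_pow v (Suc m) `` {a + \<pi> ^ m * b}"
    unfolding X by (intro equiv_class_eq[OF equiv_cong_pow] cong_pow_Suc_digit[OF xa])
  moreover have "(C, D) \<in> quot_ring v m \<times> quot_ring v 1"
    unfolding C_def D_def using x \<open>val_ge v ((x - a) / \<pi> ^ m) 0\<close>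
    by (simp add: cong_pow_class_in_quot_ring val_ring_iff)
  ultimately show "X \<in> (\<lambda>(C, D). cong_pow v (Suc m) `` {(SOME a. a \<in> C) + \<pi> ^ m * (SOME b. b \<in> D)})
      ` (quot_ring v m \<times> quot_ring v 1)"
    by (intro image_eqI[where x = "(C, D)"]) (simp_all add: a_def b_def)
qed

lemma finite_quot_ring:
  assumes "finite_residue_field v" and "n > 0"
  shows "finite (quot_ring v n)"
proof -
  have "finite (quot_ring v (Suc k))" for k
  proof (induction k)
    case (Suc k)
    show ?case
      by (rule finite_subset[OF quot_ring_Suc_subset])
        (use Suc assms(1) in \<open>simp add: finite_residue_field_def\<close>)
  qed (use assms(1) in \<open>simp add: finite_residue_field_def\<close>)
  then show ?thesis using \<open>n > 0\<close> gr0_implies_Suc by blast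
qed

definition integral_poly :: "'a poly \<Rightarrow> bool" where
  "integral_poly p \<longleftrightarrow> (\<forall>i. val_ge v (coeff p i) 0)"

lemma integral_polyD: "integral_poly p \<Longrightarrow> val_ge v (coeff p i) 0"
  by (simp add: integral_poly_def)

lemma integral_poly_pCons: "integral_poly (pCons a p) \<longleftrightarrow> val_ge v a 0 \<and> integral_poly p"
proof
  assume "integral_poly (pCons a p)"
  then have "val_ge v (coeff (pCons a p) 0) 0" "val_ge v (coeff (pCons a p) (Suc i)) 0" for i
    by (simp_all only: integral_polyD)
  then show "val_ge v a 0 \<and> integral_poly p" by (simp add: integral_poly_def)
qed (simp add: integral_poly_def coeff_pCons split: nat.split)

lemma integral_poly_pderiv: "integral_poly p \<Longrightarrow> integral_poly (pderiv p)"
  unfolding integral_poly_def coeff_pderiv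
  using val_ge_mult_integral[OF val_ge_of_nat] by blast

lemma val_ge_poly_integral:
  assumes "integral_poly p" "val_ge v x 0"
  shows "val_ge v (poly p x) 0"
  unfolding poly_altdef
  by (rule val_ge_sum, rule val_ge_mult_integral, rule integral_polyD[OF assms(1)],
      rule val_ge_power_integral[OF assms(2)])

lemma val_ge_poly_diff:
  assumes "integral_poly p" "val_ge v x 0" "val_ge v y 0" "val_ge v (x - y) M"
  shows "val_ge v (poly p x - poly p y) M"
  using assms(1)
proof (induction p)
  case (pCons a p)
  have p: "integral_poly p"
    using integral_poly_pCons pCons.prems by simp
  have eq: "poly (pCons a p) x - poly (pCons a p) y = x * (poly p x - poly p y) + (x - y) * poly p y"
    by (simp add: algebra_simps)
  show ?case
    unfolding eq
  proof (rule val_ge_add)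
    show "val_ge v (x * (poly p x - poly p y)) M"
      by (rule val_ge_mult_integral[OF assms(2) pCons.IH[OF p]])
    show "val_ge v ((x - y) * poly p y) M"
      using val_ge_mult[OF assms(4) val_ge_poly_integral[OF p assms(3)]] by simp
  qed
qed simp

lemma integral_poly_synthetic_div:
  assumes "integral_poly p" "val_ge v c 0"
  shows "integral_poly (synthetic_div p c)"
  using assms(1)
proof (induction p)
  case (pCons a p)
  have p: "integral_poly p"
    using integral_poly_pCons pCons.prems by simp
  show ?case
    unfolding synthetic_div_pCons integral_poly_pCons
    using val_ge_poly_integral[OF p assms(2)] pCons.IH[OF p] by blast
qed simp

text \<open>If \<alpha> \<notin> A, the leading term \<alpha>^d of f(\<alpha>) has strictly smaller valuation than all others.\<close>

lemma root_of_monic_integral: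
  assumes f: "integral_poly f" "monic f" and root: "poly f \<alpha> = 0"
  shows "val_ge v \<alpha> 0"
proof (rule ccontr)
  assume "\<not> val_ge v \<alpha> 0"
  then have \<alpha>: "\<alpha> \<noteq> 0" "v \<alpha> < 0" by (auto simp: val_ge_def)
  define d where "d = degree f"
  have "d \<noteq> 0"
    using root monic_degree_0[OF f(2)] by (auto simp: d_def)
  define M where "M = int (d - 1) * v \<alpha>"
  have "poly f \<alpha> = (\<Sum>i<d. coeff f i * \<alpha> ^ i) + \<alpha> ^ d"
    unfolding poly_altdef d_def using f by (simp add: lessThan_Suc_atMost[symmetric])
  then have "\<alpha> ^ d = - (\<Sum>i<d. coeff f i * \<alpha> ^ i)"
    using root by (simp add: eq_neg_iff_add_eq_0 add.commute)
  moreover have "val_ge v (\<Sum>i<d. coeff f i * \<alpha> ^ i) M"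
  proof (rule val_ge_sum)
    fix i assume "i \<in> {..<d}"
    then have "int i * v \<alpha> \<ge> M" unfolding M_def using \<alpha> by (simp add: mult_right_mono_neg)
    moreover have "val_ge v (\<alpha> ^ i) (int i * v \<alpha>)"
      using v_power[OF \<alpha>(1)] by (simp add: val_ge_def)
    ultimately show "val_ge v (coeff f i * \<alpha> ^ i) M"
      using val_ge_mult_integral[OF integral_polyD[OF f(1)]] val_ge_mono by blast
  qed
  ultimately have "val_ge v (\<alpha> ^ d) M" using val_ge_uminus by metis
  moreover have "v (\<alpha> ^ d) < M"
    using v_power[OF \<alpha>(1)] \<open>d \<noteq> 0\<close> \<alpha>(2) by (simp add: M_def of_nat_diff)
  ultimately show False using \<alpha>(1) by (simp add: val_ge_def)
qed

lemma val_ge_det_row: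
  assumes A: "A \<in> carrier_mat n n" and i: "i < n"
    and integral: "\<And>k j. k < n \<Longrightarrow> j < n \<Longrightarrow> val_ge v (A $$ (k, j)) 0"
    and row: "\<And>j. j < n \<Longrightarrow> val_ge v (A $$ (i, j)) M"
  shows "val_ge v (det A) M"
  unfolding det_def'[OF A]
proof (rule val_ge_sum)
  fix p assume "p \<in> {p. p permutes {0..<n}}"
  then have p: "p k < n" if "k < n" for k
    using that permutes_in_image[of p "{0..<n}" k] by simp
  have rest: "val_ge v (\<Prod>k\<in>{0..<n} - {i}. A $$ (k, p k)) 0"
  proof (rule val_ge_prod_integral)
    fix k assume "k \<in> {0..<n} - {i}"
    then show "val_ge v (A $$ (k, p k)) 0" using integral p by simp
  qed
  have "(\<Prod>k=0..<n. A $$ (k, p k)) = A $$ (i, p i) * (\<Prod>k\<in>{0..<n} - {i}. A $$ (k, p k))"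
    using i by (intro prod.remove) auto
  then have prod: "val_ge v (\<Prod>k=0..<n. A $$ (k, p k)) M"
    using val_ge_mult[OF row[OF p[OF i]] rest] by simp
  have sign: "val_ge v (signof p) 0"
    by (simp add: sign_def val_ge_1 val_ge_uminus)
  show "val_ge v (signof p * (\<Prod>k=0..<n. A $$ (k, p k))) M"
    by (rule val_ge_mult_integral[OF sign prod])
qed

text \<open>The resultant lies in the ideal generated by F(\<alpha>) and G(\<alpha>) in A: evaluate at \<alpha> the
  polynomial matrix whose determinant is the (constant) zeroth subresultant. Its last row
  consists of the polynomials X^k F and X^k G.\<close>

lemma val_ge_resultant:
  assumes F: "integral_poly F" and G: "integral_poly G" and "degree F + degree G \<noteq> 0"
    and \<alpha>: "val_ge v \<alpha> 0" and "val_ge v (poly F \<alpha>) M" and "val_ge v (poly G \<alpha>) M"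
  shows "val_ge v (resultant F G) M"
proof -
  define n where "n = degree F + degree G"
  define S where "S = map_mat (\<lambda>p. poly p \<alpha>) (subresultant_mat 0 F G)"
  have eval_hom: "comm_ring_hom (\<lambda>p. poly p \<alpha>)"
    by unfold_locales auto
  have "resultant F G = poly (det (subresultant_mat 0 F G)) \<alpha>"
    using subresultant_resultant[of F G] by (simp add: subresultant_def)
  also have "\<dots> = det S"
    unfolding S_def by (simp add: comm_ring_hom.hom_det[OF eval_hom])
  finally have res: "resultant F G = det S" .
  have entry: "S $$ (k, j) = (if j < degree G
        then if k = n - 1 then \<alpha> ^ (degree G - 1 - j) * poly F \<alpha>
          else coeff_int F (int (degree F) - int k + int j)
        else if k = n - 1 then \<alpha> ^ (degree F - 1 - (j - degree G)) * poly G \<alpha>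
          else coeff_int G (int (degree G) - int k + int (j - degree G)))"
    if "k < n" "j < n" for k j
    using that subresultant_index_mat[of k F 0 G j]
    by (simp add: S_def n_def Let_def poly_monom)
  have coeff_int_integral: "val_ge v (coeff_int F k) 0" "val_ge v (coeff_int G k) 0" for k
    using F G by (simp_all add: coeff_int_def integral_polyD)
  show ?thesis
    unfolding res
  proof (rule val_ge_det_row)
    show "S \<in> carrier_mat n n"
      unfolding S_def n_def map_carrier_mat
      by (rule carrier_matI) (simp_all only: subresultant_mat_dim diff_zero)
    show "n - 1 < n" using assms(3) by (simp add: n_def)
    show "val_ge v (S $$ (n - 1, j)) M" if "j < n" for j
      using entry[OF \<open>n - 1 < n\<close> that]
        val_ge_mult_integral[OF val_ge_power_integral[OF \<alpha>] assms(5)]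
        val_ge_mult_integral[OF val_ge_power_integral[OF \<alpha>] assms(6)]
      by simp
    show "val_ge v (S $$ (k, j)) 0" if "k < n" "j < n" for k j
      using entry[OF that] coeff_int_integral
        val_ge_mult_integral[OF val_ge_power_integral[OF \<alpha>] val_ge_poly_integral[OF F \<alpha>]]
        val_ge_mult_integral[OF val_ge_power_integral[OF \<alpha>] val_ge_poly_integral[OF G \<alpha>]]
      by simp
  qed
qed

lemma val_ge_discriminant_close_roots:
  assumes f: "integral_poly f" "f \<noteq> 0" and \<alpha>: "val_ge v \<alpha> 0" and \<beta>: "val_ge v \<beta> 0"
    and roots: "poly f \<alpha> = 0" "poly f \<beta> = 0" "\<alpha> \<noteq> \<beta>" and close: "val_ge v (\<alpha> - \<beta>) M"
  shows "val_ge v (resultant f (pderiv f)) M"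
proof -
  define h where "h = synthetic_div f \<alpha>"
  have fh: "f = [:-\<alpha>, 1:] * h"
    using synthetic_div_correct'[of \<alpha> f] roots(1) by (simp add: h_def)
  have "pderiv [:-\<alpha>, 1:] = 1"
    by (simp add: pderiv_pCons)
  then have "pderiv f = [:-\<alpha>, 1:] * pderiv h + h"
    by (subst fh, simp only: pderiv_mult) simp
  then have "poly (pderiv f) \<alpha> = poly h \<alpha>"
    by simp
  moreover have "(\<beta> - \<alpha>) * poly h \<beta> = 0"
    using roots(2) by (simp add: fh algebra_simps)
  then have "poly h \<beta> = 0"
    using roots(3) by simp
  moreover have "val_ge v (poly h \<alpha> - poly h \<beta>) M"
    using integral_poly_synthetic_div[OF f(1) \<alpha>] \<alpha> \<beta> close unfolding h_def
    by (rule val_ge_poly_diff)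
  moreover have "degree f \<noteq> 0"
  proof
    assume "degree f = 0"
    then obtain c where "f = [:c:]" by (rule degree_eq_zeroE)
    then show False using f(2) roots(1) by simp
  qed
  ultimately show ?thesis
    using val_ge_resultant[OF f(1) integral_poly_pderiv[OF f(1)] _ \<alpha>] roots(1) by simp
qed

lemma approx_rel_refl:
  assumes "N > r" and C: "C \<in> roots_mod v f N"
  shows "(C, C) \<in> approx_rel v f N r"
proof -
  obtain x where x: "x \<in> val_ring v" and "C = cong_pow v N `` {x}"
    using C unfolding roots_mod_def quot_ring_def by (auto elim: quotientE)
  then have "x \<in> C" "(x, x) \<in> cong_pow v (r + 1)"
    by (simp_all add: cong_pow_def)
  then show ?thesis
    using assms by (auto simp: approx_rel_def)
qed

lemma approx_rel_classes_cong:
  assumes "N > r" and "(cong_pow v N `` {x}, cong_pow v N `` {y}) \<in> approx_rel v f N r"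
  shows "(x, y) \<in> cong_pow v (r + 1)"
proof -
  have sym: "sym (cong_pow v n)" and trans: "trans (cong_pow v n)" for n
    using equiv_cong_pow by (simp_all add: equiv_def)
  obtain u w where "(x, u) \<in> cong_pow v N" "(y, w) \<in> cong_pow v N" and uw: "(u, w) \<in> cong_pow v (r + 1)"
    using assms by (auto simp: approx_rel_def)
  then have "(x, u) \<in> cong_pow v (r + 1)" "(w, y) \<in> cong_pow v (r + 1)"
    using cong_pow_antimono[of "r + 1" N] \<open>N > r\<close> symD[OF sym] by auto
  then show ?thesis
    using uw transD[OF trans] by meson
qed

lemma root_class_in_roots_mod:
  assumes "integral_poly f" "monic f" "poly f x = 0"
  shows "cong_pow v N `` {x} \<in> roots_mod v f N"
  using assms root_of_monic_integral[OF assms] cong_pow_class_in_quot_ring[of x N]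
  by (auto simp: roots_mod_def cong_pow_def val_ring_iff intro!: bexI[of _ x])

lemma finite_roots_mod_quotient:
  assumes "finite_residue_field v" "N > 0"
  shows "finite (roots_mod v f N // approx_rel v f N r)"
proof (rule finite_quotient)
  have "finite (quot_ring v N)"
    using finite_quot_ring[OF assms] .
  then show "finite (roots_mod v f N)"
    by (rule finite_subset[rotated]) (auto simp: roots_mod_def)
  show "approx_rel v f N r \<subseteq> roots_mod v f N \<times> roots_mod v f N"
    by (auto simp: approx_rel_def)
qed

lemma inj_on_root_classes:
  assumes f: "integral_poly f" "monic f"
    and \<Delta>: "resultant f (pderiv f) \<noteq> 0" "int r = v (resultant f (pderiv f))" and "N > r"
  shows "inj_on (\<lambda>x. approx_rel v f N r `` {cong_pow v N `` {x}}) {x. poly f x = 0}"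
proof (rule inj_onI)
  fix x y assume x: "x \<in> {x. poly f x = 0}" and y: "y \<in> {x. poly f x = 0}"
    and "approx_rel v f N r `` {cong_pow v N `` {x}} = approx_rel v f N r `` {cong_pow v N `` {y}}"
  then have "(cong_pow v N `` {x}, cong_pow v N `` {y}) \<in> approx_rel v f N r"
    using approx_rel_refl[OF \<open>N > r\<close> root_class_in_roots_mod[OF f, of y]] by auto
  then have "(x, y) \<in> cong_pow v (r + 1)"
    by (rule approx_rel_classes_cong[OF \<open>N > r\<close>])
  then have close: "val_ge v (x - y) (int r + 1)"
    by (simp add: cong_pow_def add.commute)
  show "x = y"
  proof (rule ccontr)
    assume "x \<noteq> y"
    moreover have "f \<noteq> 0" using f(2) by auto
    ultimately have "val_ge v (resultant f (pderiv f)) (int r + 1)"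
      using val_ge_discriminant_close_roots[OF f(1) _ root_of_monic_integral[OF f] root_of_monic_integral[OF f]
          _ _ _ close] x y by simp
    then show False
      using \<Delta> by (simp add: val_ge_def)
  qed
qed

end

theorem lemma3p5:
  fixes v :: "'a::field \<Rightarrow> int" and \<pi> :: 'a and f :: "'a poly" and N r :: nat
  assumes "discrete_valued_field v \<pi>"
    and "val_complete v"
    and "finite_residue_field v"
    and "\<forall>i. coeff f i \<in> val_ring v"
    and "monic f"
    and "resultant f (pderiv f) \<noteq> 0"
    and "int r = v (resultant f (pderiv f))"
    and "N > r"
  shows "card {x. poly f x = 0} \<le> card (roots_mod v f N // approx_rel v f N r)"
proof -
  interpret discrete_valuation v \<pi> by unfold_locales (rule assms(1))
  have f: "integral_poly f"
    using assms(4) by (simp add: integral_poly_def val_ring_iff)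
  show ?thesis
  proof (rule card_inj_on_le)
    show "inj_on (\<lambda>x. approx_rel v f N r `` {cong_pow v N `` {x}}) {x. poly f x = 0}"
      using inj_on_root_classes[OF f assms(5-8)] .
    show "(\<lambda>x. approx_rel v f N r `` {cong_pow v N `` {x}}) ` {x. poly f x = 0}
        \<subseteq> roots_mod v f N // approx_rel v f N r"
      using root_class_in_roots_mod[OF f assms(5)] by (auto intro: quotientI)
    show "finite (roots_mod v f N // approx_rel v f N r)"
      using finite_roots_mod_quotient[OF assms(3)] assms(8) by simp
  qed
qed

end
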